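(* Fix integers $d\ge1$, $k\ge2$ and $1\le t\le k-1$. Let $E$ be a set of $l$ unordered pairs $\{i,j\}$ of distinct indices in $\{1,\dots,k\}$ (so $l\le\binom{k}{2}$) such that every index $i$ lies in at most $t$ pairs of $E$. For every $\varepsilon>0$ there is a constant $C=C(\varepsilon,d,k)>0$ such that the following holds. Let $q$ be a prime power, $B$ a non-degenerate bilinear form on $\mathbb{F}_q^d$, and $\mathcal{A}_1,\dots,\mathcal{A}_k\subseteq\mathbb{F}_q^d$ with $|\mathcal{A}_i|\ge C\,q^{\frac{d-1}{2}+t}$ for all $i$. Then for any choice of $\lambda_{ij}\in\mathbb{F}_q^*$, $\{i,j\}\in E$, the number $S$ of tuples $(\mathbf{a}_1,\dots,\mathbf{a}_k)\in\mathcal{A}_1\times\cdots\times\mathcal{A}_k$ satisfying the system \[ B(\mathbf{a}_i,\mathbf{a}_j)=\lambda_{ij}\quad\text{for all }\{i,j\}\in E \] satisfies $\big|S-q^{-l}\prod_{i=1}^k|\mathcal{A}_i|\big|\le \varepsilon\, q^{-l}\prod_{i=1}^k|\mathcal{A}_i|$. (In asymptotic notation: if $|\mathcal{A}_i|\gg q^{\frac{d-1}{2}+t}$ then the system has $(1+o(1))q^{-l}\prod_i|\mathcal{A}_i|$ solutions.)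
   Context: $B:\mathbb{F}_q^d\times\mathbb{F}_q^d\to\mathbb{F}_q$ is bilinear and non-degenerate; for each pair $\{i,j\}\in E$ the equation is written with the index order $(i,j)$ fixed once and for all. $\mathbb{F}_q^*=\mathbb{F}_q\setminus\{0\}$. *)

theory Defs
  imports Complex_Main "HOL-Algebra.Ring"
begin

definition fvecs :: "('a, 'b) ring_scheme \<Rightarrow> nat \<Rightarrow> 'a list set" where
  "fvecs R d = {v. length v = d \<and> set v \<subseteq> carrier R}"

definition vadd :: "('a, 'b) ring_scheme \<Rightarrow> 'a list \<Rightarrow> 'a list \<Rightarrow> 'a list" where
  "vadd R x y = map2 (\<lambda>a b. a \<oplus>\<^bsub>R\<^esub> b) x y"

definition vsmult :: "('a, 'b) ring_scheme \<Rightarrow> 'a \<Rightarrow> 'a list \<Rightarrow> 'a list" where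
  "vsmult R c x = map (\<lambda>a. c \<otimes>\<^bsub>R\<^esub> a) x"

definition vzero :: "('a, 'b) ring_scheme \<Rightarrow> nat \<Rightarrow> 'a list" where
  "vzero R d = replicate d \<zero>\<^bsub>R\<^esub>"

definition bilinear_form :: "('a, 'b) ring_scheme \<Rightarrow> nat \<Rightarrow> ('a list \<Rightarrow> 'a list \<Rightarrow> 'a) \<Rightarrow> bool" where
  "bilinear_form R d B \<longleftrightarrow>
     (\<forall>x\<in>fvecs R d. \<forall>y\<in>fvecs R d. B x y \<in> carrier R) \<and>
     (\<forall>x\<in>fvecs R d. \<forall>y\<in>fvecs R d. \<forall>z\<in>fvecs R d.
        B (vadd R x y) z = B x z \<oplus>\<^bsub>R\<^esub> B y z \<and>
        B z (vadd R x y) = B z x \<oplus>\<^bsub>R\<^esub> B z y) \<and>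
     (\<forall>c\<in>carrier R. \<forall>x\<in>fvecs R d. \<forall>y\<in>fvecs R d.
        B (vsmult R c x) y = c \<otimes>\<^bsub>R\<^esub> B x y \<and>
        B x (vsmult R c y) = c \<otimes>\<^bsub>R\<^esub> B x y)"

text \<open>Non-degenerate: trivial left and right kernels (equivalent in finite dimension).\<close>
definition nondegenerate :: "('a, 'b) ring_scheme \<Rightarrow> nat \<Rightarrow> ('a list \<Rightarrow> 'a list \<Rightarrow> 'a) \<Rightarrow> bool" where
  "nondegenerate R d B \<longleftrightarrow>
     (\<forall>x\<in>fvecs R d. (\<forall>y\<in>fvecs R d. B x y = \<zero>\<^bsub>R\<^esub>) \<longrightarrow> x = vzero R d) \<and>
     (\<forall>y\<in>fvecs R d. (\<forall>x\<in>fvecs R d. B x y = \<zero>\<^bsub>R\<^esub>) \<longrightarrow> y = vzero R d)"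

text \<open>A system pattern E on indices {0..<k}: a set of ordered pairs (i,j) (orientation
  fixed once and for all), i \<noteq> j, each unordered pair occurring at most once.\<close>
definition edge_set :: "nat \<Rightarrow> (nat \<times> nat) set \<Rightarrow> bool" where
  "edge_set k E \<longleftrightarrow> (\<forall>(i,j)\<in>E. i < k \<and> j < k \<and> i \<noteq> j \<and> (j,i) \<notin> E)"

definition degree_in :: "(nat \<times> nat) set \<Rightarrow> nat \<Rightarrow> nat" where
  "degree_in E i = card {e\<in>E. fst e = i \<or> snd e = i}"

definition num_solutions ::
  "('a, 'b) ring_scheme \<Rightarrow> ('a list \<Rightarrow> 'a list \<Rightarrow> 'a) \<Rightarrow> nat \<Rightarrow> (nat \<times> nat) set
     \<Rightarrow> (nat \<Rightarrow> 'a list set) \<Rightarrow> (nat \<times> nat \<Rightarrow> 'a) \<Rightarrow> nat" where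
  "num_solutions R B k E A lam =
     card {as. length as = k \<and> (\<forall>i<k. as ! i \<in> A i) \<and>
               (\<forall>(i,j)\<in>E. B (as ! i) (as ! j) = lam (i,j))}"

end

theory Submission
  imports Defs "HOL-Analysis.Convex"
begin

(* The proof removes the constraints one at a time.  For a constraint (u,v) of a subsystem F,
   write S(F) for its number of solutions.  Summing over all coordinates except u and v,
   S(F) - S(F - {(u,v)})/q is a sum of incidence discrepancies
     #{(x,y) in X x Y : B(x,y) = lam} - |X||Y|/q
   between the admissible sets X of a_u and Y of a_v.  For a non-degenerate form each such
   discrepancy is at most (2 q^(d-1) |X||Y|)^(1/2): this follows from a variance computation,
   since the level sets of B(., y) are hyperplanes of size q^(d-1) and those of two
   independent functionals have size q^(d-2).  Cauchy-Schwarz over the remaining coordinates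
   bounds the total error by the counts of the two systems with u, resp. v, deleted; each of
   these loses at most t constraints, so by induction it is at most (1+delta)^(|F|-1) q^t
   prod|A_i| / q^|F|.  The size assumption |A_i| >= C q^((d-1)/2 + t) turns this into a
   relative error delta = sqrt 2 / C per constraint, hence (1+delta)^|E| - 1 <= eps overall. *)

lemma sum_indicator_card:
  "finite A \<Longrightarrow> (\<Sum>x\<in>A. if P x then 1 else (0::real)) = real (card {x\<in>A. P x})"
  by (simp add: sum.If_cases Int_def conj_commute)

lemma card_fibers:
  assumes "finite A" "f ` A \<subseteq> T" "finite T"
  shows "card A = (\<Sum>t\<in>T. card {x\<in>A. f x = t})"
proof -
  have "A = (\<Union>t\<in>T. {x\<in>A. f x = t})" using assms(2) by blast
  hence "card A = card (\<Union>t\<in>T. {x\<in>A. f x = t})" by simp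
  also have "\<dots> = (\<Sum>t\<in>T. card {x\<in>A. f x = t})"
    by (rule card_UN_disjoint) (use assms in auto)
  finally show ?thesis .
qed

lemma bij_PiE_split_two:
  assumes "u \<in> I" "v \<in> I" "u \<noteq> v"
  shows "bij_betw (\<lambda>(r, x, y). r(u := x, v := y)) (PiE (I - {u, v}) A \<times> (A u \<times> A v)) (PiE I A)"
proof (rule bij_betwI[where g = "\<lambda>f. (f(u := undefined, v := undefined), f u, f v)"])
  show "(\<lambda>(r, x, y). r(u := x, v := y)) \<in> PiE (I - {u, v}) A \<times> (A u \<times> A v) \<rightarrow> PiE I A"
  proof
    fix p assume p: "p \<in> PiE (I - {u, v}) A \<times> (A u \<times> A v)"
    obtain r x y where rxy: "p = (r, x, y)" by (cases p) auto
    have r: "r \<in> PiE (I - {u, v}) A" and x: "x \<in> A u" and y: "y \<in> A v" using p rxy by auto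
    have "r(u := x, v := y) \<in> PiE I A"
    proof (rule PiE_I)
      fix i assume "i \<in> I"
      thus "(r(u := x, v := y)) i \<in> A i" using r x y by (cases "i = u"; cases "i = v") auto
    next
      fix i assume "i \<notin> I"
      thus "(r(u := x, v := y)) i = undefined" using r assms by auto
    qed
    thus "(\<lambda>(r, x, y). r(u := x, v := y)) p \<in> PiE I A" unfolding rxy by simp
  qed
  show "(\<lambda>f. (f(u := undefined, v := undefined), f u, f v)) \<in> PiE I A \<rightarrow> PiE (I - {u, v}) A \<times> (A u \<times> A v)"
  proof
    fix f assume f: "f \<in> PiE I A"
    have "f(u := undefined, v := undefined) \<in> PiE (I - {u, v}) A"
    proof (rule PiE_I)
      fix i assume "i \<in> I - {u, v}"
      thus "(f(u := undefined, v := undefined)) i \<in> A i" using f by auto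
    next
      fix i assume "i \<notin> I - {u, v}"
      thus "(f(u := undefined, v := undefined)) i = undefined" using f by (cases "i \<in> I") auto
    qed
    moreover have "f u \<in> A u" "f v \<in> A v" using f assms by auto
    ultimately show "(f(u := undefined, v := undefined), f u, f v) \<in> PiE (I - {u, v}) A \<times> (A u \<times> A v)"
      by simp
  qed
  show "(\<lambda>f. (f(u := undefined, v := undefined), f u, f v)) ((\<lambda>(r, x, y). r(u := x, v := y)) p) = p"
    if "p \<in> PiE (I - {u, v}) A \<times> (A u \<times> A v)" for p
  proof -
    obtain r x y where rxy: "p = (r, x, y)" by (cases p) auto
    have "r \<in> PiE (I - {u, v}) A" using that rxy by auto
    hence "r u = undefined" "r v = undefined" by auto
    hence "(r(u := x, v := y))(u := undefined, v := undefined) = r" by (auto simp: fun_eq_iff)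
    thus ?thesis unfolding rxy using assms(3) by simp
  qed
qed (simp add: fun_eq_iff)

lemma sum_PiE_split_two:
  fixes G :: "('i \<Rightarrow> 'a) \<Rightarrow> 'b::comm_monoid_add"
  assumes "u \<in> I" "v \<in> I" "u \<noteq> v"
  shows "(\<Sum>f\<in>PiE I A. G f)
           = (\<Sum>r\<in>PiE (I - {u, v}) A. \<Sum>x\<in>A u. \<Sum>y\<in>A v. G (r(u := x, v := y)))"
proof -
  have "(\<Sum>f\<in>PiE I A. G f)
      = (\<Sum>p\<in>PiE (I - {u, v}) A \<times> (A u \<times> A v). G ((\<lambda>(r, x, y). r(u := x, v := y)) p))"
    using sum.reindex_bij_betw[OF bij_PiE_split_two[OF assms], of G] by simp
  thus ?thesis by (simp add: sum.cartesian_product split_def)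
qed

lemma sum_square_le_by_products:
  fixes g a b :: "'r \<Rightarrow> real"
  assumes g: "\<And>r. r \<in> P \<Longrightarrow> (g r)\<^sup>2 \<le> c * a r * b r"
    and a: "\<And>r. r \<in> P \<Longrightarrow> a r \<ge> 0" and b: "\<And>r. r \<in> P \<Longrightarrow> b r \<ge> 0" and c: "c \<ge> 0"
  shows "(\<Sum>r\<in>P. g r)\<^sup>2 \<le> c * (\<Sum>r\<in>P. a r) * (\<Sum>r\<in>P. b r)"
proof -
  define s where "s = (\<Sum>r\<in>P. sqrt (a r) * sqrt (b r))"
  have termwise: "\<bar>g r\<bar> \<le> sqrt c * (sqrt (a r) * sqrt (b r))" if "r \<in> P" for r
  proof -
    have "\<bar>g r\<bar> = sqrt ((g r)\<^sup>2)" by simp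
    also have "\<dots> \<le> sqrt (c * a r * b r)" using g[OF that] by (rule real_sqrt_le_mono)
    also have "\<dots> = sqrt c * (sqrt (a r) * sqrt (b r))" by (simp add: real_sqrt_mult mult.assoc)
    finally show ?thesis .
  qed
  have "\<bar>\<Sum>r\<in>P. g r\<bar> \<le> (\<Sum>r\<in>P. \<bar>g r\<bar>)" by (rule sum_abs)
  also have "\<dots> \<le> (\<Sum>r\<in>P. sqrt c * (sqrt (a r) * sqrt (b r)))" using termwise by (rule sum_mono)
  also have "\<dots> = sqrt c * s" unfolding s_def by (simp add: sum_distrib_left)
  finally have "(\<Sum>r\<in>P. g r)\<^sup>2 \<le> (sqrt c * s)\<^sup>2"
    by (metis abs_ge_zero order_trans power2_abs power_mono)
  also have "\<dots> = c * s\<^sup>2" using c by (simp add: power_mult_distrib)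
  also have "\<dots> \<le> c * ((\<Sum>r\<in>P. a r) * (\<Sum>r\<in>P. b r))"
  proof (rule mult_left_mono[OF _ c])
    have "s\<^sup>2 \<le> (\<Sum>r\<in>P. (sqrt (a r))\<^sup>2) * (\<Sum>r\<in>P. (sqrt (b r))\<^sup>2)"
      unfolding s_def by (rule Cauchy_Schwarz_ineq_sum)
    also have "\<dots> = (\<Sum>r\<in>P. a r) * (\<Sum>r\<in>P. b r)" using a b by (simp cong: sum.cong)
    finally show "s\<^sup>2 \<le> (\<Sum>r\<in>P. a r) * (\<Sum>r\<in>P. b r)" .
  qed
  finally show ?thesis by (simp add: mult.assoc)
qed

section \<open>A non-degenerate bilinear form on \<open>\<bbbF>\<^sub>q\<^sup>d\<close>\<close>

lemma fvecs_iff: "v \<in> fvecs R d \<longleftrightarrow> length v = d \<and> (\<forall>i<d. v!i \<in> carrier R)"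
  unfolding fvecs_def by (auto simp: subset_iff in_set_conv_nth)

locale nondeg_bilinear_space = field R for R (structure) +
  fixes d :: nat and B :: "'a list \<Rightarrow> 'a list \<Rightarrow> 'a"
  assumes finite_carrier: "finite (carrier R)"
    and bilinear: "bilinear_form R d B"
    and nondeg: "nondegenerate R d B"
begin

abbreviation "V \<equiv> fvecs R d"
abbreviation "q \<equiv> card (carrier R)"

lemma vadd_closed: "x \<in> V \<Longrightarrow> y \<in> V \<Longrightarrow> vadd R x y \<in> V"
  by (auto simp: fvecs_iff vadd_def)

lemma vsmult_closed: "c \<in> carrier R \<Longrightarrow> x \<in> V \<Longrightarrow> vsmult R c x \<in> V"
  by (auto simp: fvecs_iff vsmult_def)

lemma vzero_closed: "vzero R d \<in> V"
  by (auto simp: fvecs_iff vzero_def)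

lemma vsmult_one: "y \<in> V \<Longrightarrow> vsmult R \<one> y = y"
  by (rule nth_equalityI) (auto simp: vsmult_def fvecs_iff)

lemma finite_V: "finite V"
  unfolding fvecs_def using finite_lists_length_eq[OF finite_carrier, of d]
  by (simp add: conj_commute)

lemma card_V: "card V = q ^ d"
  unfolding fvecs_def using card_lists_length_eq[OF finite_carrier, of d]
  by (simp add: conj_commute)

lemma q_ge_2: "q \<ge> 2"
proof -
  have "{\<zero>, \<one>} \<subseteq> carrier R" by simp
  hence "card {\<zero>, \<one>} \<le> q" using finite_carrier card_mono by blast
  thus ?thesis by simp
qed

lemma B_closed: "x \<in> V \<Longrightarrow> y \<in> V \<Longrightarrow> B x y \<in> carrier R"
  using bilinear unfolding bilinear_form_def by blast

lemma B_add_left: "x \<in> V \<Longrightarrow> y \<in> V \<Longrightarrow> z \<in> V \<Longrightarrow> B (vadd R x y) z = B x z \<oplus> B y z"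
  using bilinear unfolding bilinear_form_def by blast

lemma B_add_right: "x \<in> V \<Longrightarrow> y \<in> V \<Longrightarrow> z \<in> V \<Longrightarrow> B z (vadd R x y) = B z x \<oplus> B z y"
  using bilinear unfolding bilinear_form_def by blast

lemma B_smult_left: "c \<in> carrier R \<Longrightarrow> x \<in> V \<Longrightarrow> y \<in> V \<Longrightarrow> B (vsmult R c x) y = c \<otimes> B x y"
  using bilinear unfolding bilinear_form_def by blast

lemma B_smult_right: "c \<in> carrier R \<Longrightarrow> x \<in> V \<Longrightarrow> y \<in> V \<Longrightarrow> B x (vsmult R c y) = c \<otimes> B x y"
  using bilinear unfolding bilinear_form_def by blast

lemma B_shift_left:
  "c \<in> carrier R \<Longrightarrow> x \<in> V \<Longrightarrow> w \<in> V \<Longrightarrow> y \<in> V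
     \<Longrightarrow> B (vadd R x (vsmult R c w)) y = B x y \<oplus> c \<otimes> B w y"
  by (simp add: B_add_left B_smult_left vsmult_closed)

lemma B_zero_right: "x \<in> V \<Longrightarrow> B x (vzero R d) = \<zero>"
proof -
  assume x: "x \<in> V"
  have "vsmult R \<zero> (vzero R d) = vzero R d" by (simp add: vsmult_def vzero_def)
  thus ?thesis using B_smult_right[of \<zero> x "vzero R d"] x vzero_closed B_closed by simp
qed

lemma exists_dual_vector:
  assumes "y \<in> V" "y \<noteq> vzero R d"
  shows "\<exists>x\<^sub>0\<in>V. B x\<^sub>0 y = \<one>"
proof -
  obtain x where x: "x \<in> V" "B x y \<noteq> \<zero>"
    using nondeg assms unfolding nondegenerate_def by blast
  hence u: "B x y \<in> Units R" using B_closed assms field_Units by blast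
  have "vsmult R (inv (B x y)) x \<in> V" using u x by (intro vsmult_closed) auto
  moreover have "B (vsmult R (inv (B x y)) x) y = \<one>"
    using B_smult_left[of "inv (B x y)" x y] u x assms by simp
  ultimately show ?thesis by blast
qed

lemma multiple_if_orthogonal_subset:
  assumes y: "y \<in> V" "y' \<in> V" "y \<noteq> vzero R d"
    and orth: "\<And>x. x \<in> V \<Longrightarrow> B x y = \<zero> \<Longrightarrow> B x y' = \<zero>"
  shows "\<exists>c\<in>carrier R. y' = vsmult R c y"
proof -
  obtain x\<^sub>0 where x\<^sub>0: "x\<^sub>0 \<in> V" "B x\<^sub>0 y = \<one>" using exists_dual_vector y by blast
  define c where "c = B x\<^sub>0 y'"
  have c: "c \<in> carrier R" unfolding c_def using B_closed x\<^sub>0 y by blast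
  define w where "w = vadd R y' (vsmult R (\<ominus> c) y)"
  have w: "w \<in> V" unfolding w_def using y c by (intro vadd_closed vsmult_closed) auto
  text \<open>\<open>w = y' - c\<cdot>y\<close> is orthogonal to everything: project \<open>x\<close> onto \<open>y\<^sup>\<perp>\<close> along \<open>x\<^sub>0\<close>.\<close>
  have "B x w = \<zero>" if x: "x \<in> V" for x
  proof -
    define b where "b = B x y"
    have b: "b \<in> carrier R" unfolding b_def using B_closed x y by blast
    define z where "z = vadd R x (vsmult R (\<ominus> b) x\<^sub>0)"
    have z: "z \<in> V" unfolding z_def using x x\<^sub>0 b by (intro vadd_closed vsmult_closed) auto
    have "B z y = b \<oplus> \<ominus> b \<otimes> \<one>"
      unfolding z_def using B_shift_left[of "\<ominus> b" x x\<^sub>0 y] x x\<^sub>0 y b by (simp add: b_def)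
    also have "\<dots> = \<zero>" using b by algebra
    finally have "B z y' = \<zero>" using orth z by blast
    moreover have "B z y' = B x y' \<oplus> \<ominus> b \<otimes> c"
      unfolding z_def using B_shift_left[of "\<ominus> b" x x\<^sub>0 y'] x x\<^sub>0 y b by (simp add: c_def)
    moreover have "B x w = B x y' \<oplus> \<ominus> c \<otimes> b"
      unfolding w_def b_def using B_add_right B_smult_right x y c by (simp add: vsmult_closed)
    moreover have "\<ominus> c \<otimes> b = \<ominus> b \<otimes> c" using b c by algebra
    ultimately show "B x w = \<zero>" by simp
  qed
  hence w0: "w = vzero R d" using nondeg w unfolding nondegenerate_def by blast
  have "y' = vsmult R c y"
  proof (rule nth_equalityI)
    show "length y' = length (vsmult R c y)" using y by (simp add: fvecs_iff vsmult_def)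
    fix i assume "i < length y'"
    hence i: "i < d" using y by (simp add: fvecs_iff)
    have yi: "y!i \<in> carrier R" "y'!i \<in> carrier R" using y i by (auto simp: fvecs_iff)
    have "w!i = y'!i \<oplus> (\<ominus> c \<otimes> y!i)" using y i unfolding w_def by (simp add: vadd_def vsmult_def fvecs_iff)
    hence "y'!i \<oplus> (\<ominus> c \<otimes> y!i) = \<zero>" using w0 i by (simp add: vzero_def)
    moreover have "y'!i = y'!i \<oplus> (\<ominus> c \<otimes> y!i) \<oplus> c \<otimes> y!i" using yi c by algebra
    ultimately have "y'!i = c \<otimes> y!i" using yi c by simp
    thus "y'!i = (vsmult R c y)!i" using i y by (simp add: vsmult_def fvecs_iff)
  qed
  thus ?thesis using c by blast
qed

lemma exists_dual_pair:
  assumes y: "y \<in> V" "y' \<in> V" "y \<noteq> vzero R d"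
    and indep: "\<forall>c\<in>carrier R. y' \<noteq> vsmult R c y"
  shows "\<exists>x\<^sub>1\<in>V. \<exists>x\<^sub>2\<in>V. B x\<^sub>1 y = \<one> \<and> B x\<^sub>1 y' = \<zero> \<and> B x\<^sub>2 y = \<zero> \<and> B x\<^sub>2 y' = \<one>"
proof -
  obtain x where x: "x \<in> V" "B x y = \<zero>" "B x y' \<noteq> \<zero>"
    using multiple_if_orthogonal_subset[OF y] indep by blast
  hence e: "B x y' \<in> Units R" using B_closed y field_Units by blast
  define x\<^sub>2 where "x\<^sub>2 = vsmult R (inv (B x y')) x"
  have x\<^sub>2: "x\<^sub>2 \<in> V" "B x\<^sub>2 y = \<zero>" "B x\<^sub>2 y' = \<one>"
    unfolding x\<^sub>2_def using B_smult_left[of "inv (B x y')" x] e x y by (auto intro: vsmult_closed)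
  obtain x\<^sub>0 where x\<^sub>0: "x\<^sub>0 \<in> V" "B x\<^sub>0 y = \<one>" using exists_dual_vector y by blast
  define c where "c = B x\<^sub>0 y'"
  have c: "c \<in> carrier R" unfolding c_def using B_closed x\<^sub>0 y by blast
  define x\<^sub>1 where "x\<^sub>1 = vadd R x\<^sub>0 (vsmult R (\<ominus> c) x\<^sub>2)"
  have "x\<^sub>1 \<in> V" unfolding x\<^sub>1_def using x\<^sub>0 x\<^sub>2 c by (intro vadd_closed vsmult_closed) auto
  moreover have "B x\<^sub>1 y = \<one>"
    unfolding x\<^sub>1_def using B_shift_left[of "\<ominus> c" x\<^sub>0 x\<^sub>2 y] x\<^sub>0 x\<^sub>2 y c by simp
  moreover have "B x\<^sub>1 y' = c \<oplus> \<ominus> c \<otimes> \<one>"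
    unfolding x\<^sub>1_def using B_shift_left[of "\<ominus> c" x\<^sub>0 x\<^sub>2 y'] x\<^sub>0 x\<^sub>2 y c by (simp add: c_def)
  hence "B x\<^sub>1 y' = \<zero>" using c by algebra
  ultimately show ?thesis using x\<^sub>2 by blast
qed

lemma vadd_right_inj:
  assumes "x \<in> V" "x' \<in> V" "w \<in> V" "vadd R x w = vadd R x' w"
  shows "x = x'"
proof (rule nth_equalityI)
  show "length x = length x'" using assms by (simp add: fvecs_iff)
  fix i assume "i < length x"
  hence i: "i < d" using assms by (simp add: fvecs_iff)
  have "x!i \<oplus> w!i = x'!i \<oplus> w!i"
    using arg_cong[OF assms(4), of "\<lambda>z. z!i"] assms(1-3) i by (simp add: vadd_def fvecs_iff)
  thus "x!i = x'!i" using assms(1-3) i by (meson add.right_cancel fvecs_iff)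
qed

lemma card_le_by_translation:
  assumes w: "w \<in> V" and maps: "\<And>x. x \<in> V \<Longrightarrow> P x \<Longrightarrow> Q (vadd R x w)"
  shows "card {x\<in>V. P x} \<le> card {x\<in>V. Q x}"
proof (rule card_inj_on_le[of "\<lambda>x. vadd R x w"])
  show "inj_on (\<lambda>x. vadd R x w) {x\<in>V. P x}"
    using vadd_right_inj w by (auto simp: inj_on_def)
  show "(\<lambda>x. vadd R x w) ` {x\<in>V. P x} \<subseteq> {x\<in>V. Q x}"
  proof
    fix z assume "z \<in> (\<lambda>x. vadd R x w) ` {x\<in>V. P x}"
    then obtain x where "x \<in> V" "P x" "z = vadd R x w" by blast
    thus "z \<in> {x\<in>V. Q x}" using maps w vadd_closed by blast
  qed
qed (use finite_V in simp)

lemma card_level_set: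
  assumes y: "y \<in> V" "y \<noteq> vzero R d" and l: "l \<in> carrier R"
  shows "q * card {x\<in>V. B x y = l} = q ^ d"
proof -
  obtain x\<^sub>0 where x\<^sub>0: "x\<^sub>0 \<in> V" "B x\<^sub>0 y = \<one>" using exists_dual_vector y by blast
  have same: "card {x\<in>V. B x y = m} \<le> card {x\<in>V. B x y = m'}"
    if m: "m \<in> carrier R" "m' \<in> carrier R" for m m'
  proof (rule card_le_by_translation[where w = "vsmult R (m' \<ominus> m) x\<^sub>0"])
    show "vsmult R (m' \<ominus> m) x\<^sub>0 \<in> V" using x\<^sub>0 m by (intro vsmult_closed) auto
    fix x assume x: "x \<in> V" "B x y = m"
    have "B (vadd R x (vsmult R (m' \<ominus> m) x\<^sub>0)) y = m \<oplus> (m' \<ominus> m) \<otimes> \<one>"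
      using B_shift_left[of "m' \<ominus> m" x x\<^sub>0 y] x x\<^sub>0 y m by simp
    also have "\<dots> = m'" using m by algebra
    finally show "B (vadd R x (vsmult R (m' \<ominus> m) x\<^sub>0)) y = m'" .
  qed
  have "q ^ d = (\<Sum>m\<in>carrier R. card {x\<in>V. B x y = m})"
    unfolding card_V[symmetric] by (rule card_fibers) (use finite_V finite_carrier B_closed y in auto)
  also have "\<dots> = (\<Sum>m\<in>carrier R. card {x\<in>V. B x y = l})"
    using same l by (intro sum.cong refl antisym) auto
  finally show ?thesis by simp
qed

lemma card_level_set_pair_le:
  assumes y: "y \<in> V" "y' \<in> V" "y \<noteq> vzero R d" and indep: "\<forall>c\<in>carrier R. y' \<noteq> vsmult R c y"
    and l: "l \<in> carrier R" "l' \<in> carrier R"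
  shows "q ^ 2 * card {x\<in>V. B x y = l \<and> B x y' = l'} \<le> q ^ d"
proof -
  obtain x\<^sub>1 x\<^sub>2 where x: "x\<^sub>1 \<in> V" "x\<^sub>2 \<in> V" "B x\<^sub>1 y = \<one>" "B x\<^sub>1 y' = \<zero>" "B x\<^sub>2 y = \<zero>" "B x\<^sub>2 y' = \<one>"
    using exists_dual_pair[OF y indep] by blast
  have le: "card {x\<in>V. B x y = l \<and> B x y' = l'} \<le> card {x\<in>V. B x y = a \<and> B x y' = b}"
    if ab: "a \<in> carrier R" "b \<in> carrier R" for a b
  proof -
    define w where "w = vadd R (vsmult R (a \<ominus> l) x\<^sub>1) (vsmult R (b \<ominus> l') x\<^sub>2)"
    have w: "w \<in> V" unfolding w_def using x l ab by (intro vadd_closed vsmult_closed) auto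
    have shift: "B (vadd R z w) y'' = B z y'' \<oplus> ((a \<ominus> l) \<otimes> B x\<^sub>1 y'' \<oplus> (b \<ominus> l') \<otimes> B x\<^sub>2 y'')"
      if "z \<in> V" "y'' \<in> V" for z y''
      unfolding w_def using that x l ab by (simp add: B_add_left B_smult_left vadd_closed vsmult_closed)
    show ?thesis
    proof (rule card_le_by_translation[OF w])
      fix z assume z: "z \<in> V" "B z y = l \<and> B z y' = l'"
      have "B (vadd R z w) y = l \<oplus> ((a \<ominus> l) \<otimes> \<one> \<oplus> (b \<ominus> l') \<otimes> \<zero>)" using shift z y x by simp
      also have "\<dots> = a" using l ab by algebra
      moreover have "B (vadd R z w) y' = l' \<oplus> ((a \<ominus> l) \<otimes> \<zero> \<oplus> (b \<ominus> l') \<otimes> \<one>)" using shift z y x by simp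
      moreover have "\<dots> = b" using l ab by algebra
      ultimately show "B (vadd R z w) y = a \<and> B (vadd R z w) y' = b" by simp
    qed
  qed
  have "q ^ 2 * card {x\<in>V. B x y = l \<and> B x y' = l'}
      = (\<Sum>p\<in>carrier R \<times> carrier R. card {x\<in>V. B x y = l \<and> B x y' = l'})"
    by (simp add: card_cartesian_product power2_eq_square)
  also have "\<dots> \<le> (\<Sum>p\<in>carrier R \<times> carrier R. card {x\<in>V. (B x y, B x y') = p})"
    by (rule sum_mono) (use le in auto)
  also have "\<dots> = q ^ d"
    unfolding card_V[symmetric] by (rule card_fibers[symmetric]) (use finite_V finite_carrier B_closed y in auto)
  finally show ?thesis .
qed

lemma card_level_set_nonzero:
  assumes y: "y \<in> V" and l: "l \<in> carrier R" "l \<noteq> \<zero>"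
  shows "real q * card {x\<in>V. B x y = l} = (if y = vzero R d then 0 else real q ^ d)"
proof (cases "y = vzero R d")
  case True
  hence "{x\<in>V. B x y = l} = {}" using B_zero_right l by auto
  thus ?thesis using True by (simp only: card.empty) simp
next
  case False
  thus ?thesis using arg_cong[OF card_level_set[OF y False l(1)], of real] by simp
qed

text \<open>Two distinct vectors \<open>y \<noteq> y'\<close> have at most \<open>q\<^sup>d\<^sup>-\<^sup>2\<close> common solutions of
  \<open>B(x,y) = B(x,y') = l\<close>, \<open>l \<noteq> 0\<close>: dependent pairs \<open>y' = c\<cdot>y\<close> (\<open>c \<noteq> 1\<close>) have none.\<close>
lemma card_common_level_le:
  assumes y: "y \<in> V" "y' \<in> V" "y \<noteq> y'" and l: "l \<in> carrier R" "l \<noteq> \<zero>"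
  shows "real q ^ 2 * card {x\<in>V. B x y = l \<and> B x y' = l} \<le> real q ^ d"
proof (cases "y = vzero R d \<or> (\<exists>c\<in>carrier R. y' = vsmult R c y)")
  case True
  have "{x\<in>V. B x y = l \<and> B x y' = l} = {}"
  proof (rule ccontr)
    assume "{x\<in>V. B x y = l \<and> B x y' = l} \<noteq> {}"
    then obtain x where x: "x \<in> V" "B x y = l" "B x y' = l" by blast
    show False using True
    proof
      assume "y = vzero R d" thus False using x B_zero_right l by auto
    next
      assume "\<exists>c\<in>carrier R. y' = vsmult R c y"
      then obtain c where c: "c \<in> carrier R" "y' = vsmult R c y" by blast
      hence "\<one> \<otimes> l = c \<otimes> l" using x B_smult_right[of c x y] y l by simp
      hence "c = \<one>" using m_rcancel[of l \<one> c] l c by simp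
      thus False using c y vsmult_one by auto
    qed
  qed
  thus ?thesis by (simp only: card.empty) simp
next
  case False
  hence "y \<noteq> vzero R d" "\<forall>c\<in>carrier R. y' \<noteq> vsmult R c y" by auto
  from card_level_set_pair_le[OF y(1,2) this l(1) l(1)]
  have "real (q ^ 2 * card {x\<in>V. B x y = l \<and> B x y' = l}) \<le> real (q ^ d)" by (simp only: of_nat_le_iff)
  thus ?thesis by simp
qed

end

section \<open>Incidences between two sets of vectors\<close>

text \<open>The arithmetic core of the variance bound: from the first moment \<open>S\<^sub>1\<close> and second moment
  \<open>S\<^sub>2\<close> of a counting function over \<open>D\<close> points, with mean \<open>n/Q\<close>, the variance is at most
  \<open>2(D/Q)n\<close>.\<close>
lemma variance_from_moments:
  fixes Q n S1 S2 D :: real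
  assumes Q: "Q \<ge> 2" and n: "n \<ge> 0" and D: "D \<ge> 0"
    and second: "Q ^ 2 * S2 \<le> n * (Q * D) + n ^ 2 * D" and first: "n * D - D \<le> Q * S1"
  shows "S2 - 2 * (n / Q) * S1 + D * (n / Q) ^ 2 \<le> 2 * (D / Q) * n"
proof -
  have Q0: "Q \<noteq> 0" "Q > 0" using Q by auto
  have m: "2 * n * (n * D - D) \<le> 2 * n * (Q * S1)" using mult_left_mono[OF first, of "2 * n"] n by simp
  have "Q ^ 2 * (S2 - 2 * (n / Q) * S1 + D * (n / Q) ^ 2) = Q ^ 2 * S2 - 2 * n * (Q * S1) + D * n ^ 2"
    using Q0 by (simp add: field_simps power2_eq_square)
  also have "\<dots> \<le> (n * (Q * D) + n ^ 2 * D) - 2 * n * (n * D - D) + D * n ^ 2"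
    using second m by linarith
  also have "\<dots> = n * Q * D + 2 * n * D" by (simp add: algebra_simps power2_eq_square)
  also have "\<dots> \<le> Q ^ 2 * (2 * (D / Q) * n)"
  proof -
    have "2 * (n * D) \<le> Q * (n * D)" using mult_right_mono[OF Q] n D by simp
    moreover have "Q ^ 2 * (2 * (D / Q) * n) = 2 * Q * (n * D)"
      using Q0 by (simp add: field_simps power2_eq_square)
    ultimately show ?thesis by (simp add: algebra_simps)
  qed
  finally show ?thesis by (rule mult_left_le_imp_le) (use Q0 in simp)
qed

context nondeg_bilinear_space
begin

definition hits :: "'a list set \<Rightarrow> 'a \<Rightarrow> 'a list \<Rightarrow> real" where
  "hits Y l x = (\<Sum>y\<in>Y. if B x y = l then 1 else 0)"

text \<open>First moment: every \<open>y \<noteq> 0\<close> is hit by exactly \<open>q\<^sup>d\<^sup>-\<^sup>1\<close> vectors \<open>x\<close>.\<close>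
lemma hits_first_moment:
  assumes Y: "Y \<subseteq> V" and l: "l \<in> carrier R" "l \<noteq> \<zero>"
  shows "real (card Y) * real q ^ d - real q ^ d \<le> real q * (\<Sum>x\<in>V. hits Y l x)"
proof -
  have finY: "finite Y" using Y finite_V finite_subset by blast
  have "(\<Sum>x\<in>V. hits Y l x) = (\<Sum>y\<in>Y. real (card {x\<in>V. B x y = l}))"
    unfolding hits_def by (subst sum.swap) (simp add: sum_indicator_card[OF finite_V])
  hence "real q * (\<Sum>x\<in>V. hits Y l x) = (\<Sum>y\<in>Y. real q * real (card {x\<in>V. B x y = l}))"
    by (simp add: sum_distrib_left)
  also have "\<dots> = (\<Sum>y\<in>Y. real q ^ d - (if y = vzero R d then real q ^ d else 0))"
  proof (rule sum.cong[OF refl])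
    fix y assume "y \<in> Y"
    thus "real q * real (card {x\<in>V. B x y = l}) = real q ^ d - (if y = vzero R d then real q ^ d else 0)"
      by (subst card_level_set_nonzero) (use Y l in auto)
  qed
  also have "\<dots> = real (card Y) * real q ^ d - (\<Sum>y\<in>Y. if y = vzero R d then real q ^ d else 0)"
    by (simp add: sum_subtractf)
  finally show ?thesis using finY by (simp add: sum.delta)
qed

text \<open>Second moment: a pair \<open>y \<noteq> y'\<close> is hit simultaneously by at most \<open>q\<^sup>d\<^sup>-\<^sup>2\<close> vectors.\<close>
lemma hits_second_moment:
  assumes Y: "Y \<subseteq> V" and l: "l \<in> carrier R" "l \<noteq> \<zero>"
  shows "real q ^ 2 * (\<Sum>x\<in>V. (hits Y l x)\<^sup>2)
           \<le> real (card Y) * (real q * real q ^ d) + real (card Y) ^ 2 * real q ^ d"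
proof -
  define Q where "Q = real q"
  have Q2: "Q \<ge> 2" unfolding Q_def using q_ge_2 by simp
  have finY: "finite Y" using Y finite_V finite_subset by blast
  define both where "both x y y' = (if B x y = l \<and> B x y' = l then 1 else (0::real))" for x y y'
  have pair: "Q ^ 2 * (\<Sum>x\<in>V. both x y y') \<le> (if y = y' then Q * Q ^ d else Q ^ d)"
    if "y \<in> Y" "y' \<in> Y" for y y'
  proof -
    have count: "(\<Sum>x\<in>V. both x y y') = real (card {x\<in>V. B x y = l \<and> B x y' = l})"
      unfolding both_def by (rule sum_indicator_card[OF finite_V])
    show ?thesis
    proof (cases "y = y'")
      case True
      have "Q * card {x\<in>V. B x y = l} \<le> Q ^ d"
        using card_level_set_nonzero[of y l] that Y l Q2 unfolding Q_def by auto
      hence "Q * (Q * card {x\<in>V. B x y = l}) \<le> Q * Q ^ d" using Q2 by simp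
      thus ?thesis using count True by (simp add: power2_eq_square)
    next
      case False
      thus ?thesis using count card_common_level_le[of y y' l] that Y l unfolding Q_def by auto
    qed
  qed
  have "(\<Sum>x\<in>V. (hits Y l x)\<^sup>2) = (\<Sum>x\<in>V. \<Sum>y\<in>Y. \<Sum>y'\<in>Y. both x y y')"
    unfolding hits_def both_def power2_eq_square sum_product by (intro sum.cong) auto
  also have "\<dots> = (\<Sum>y\<in>Y. \<Sum>y'\<in>Y. \<Sum>x\<in>V. both x y y')"
    by (subst sum.swap) (rule sum.cong[OF refl], rule sum.swap)
  finally have "Q ^ 2 * (\<Sum>x\<in>V. (hits Y l x)\<^sup>2) = (\<Sum>y\<in>Y. \<Sum>y'\<in>Y. Q ^ 2 * (\<Sum>x\<in>V. both x y y'))"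
    by (simp add: sum_distrib_left)
  also have "\<dots> \<le> (\<Sum>y\<in>Y. \<Sum>y'\<in>Y. (if y = y' then Q * Q ^ d else 0) + Q ^ d)"
    using pair Q2 by (intro sum_mono) (smt (verit) zero_le_power)
  also have "\<dots> = real (card Y) * (Q * Q ^ d) + real (card Y) ^ 2 * Q ^ d"
    using finY by (simp add: sum.distrib sum.delta power2_eq_square algebra_simps)
  finally show ?thesis unfolding Q_def .
qed

lemma hits_variance:
  assumes Y: "Y \<subseteq> V" and l: "l \<in> carrier R" "l \<noteq> \<zero>"
  shows "(\<Sum>x\<in>V. (hits Y l x - real (card Y) / q)\<^sup>2) \<le> 2 * (real q ^ d / q) * card Y"
proof -
  define n where "n = real (card Y)"
  define a where "a = n / real q"
  have "(\<Sum>x\<in>V. (hits Y l x - a)\<^sup>2)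
      = (\<Sum>x\<in>V. (hits Y l x)\<^sup>2) - 2 * a * (\<Sum>x\<in>V. hits Y l x) + real (card V) * a ^ 2"
    by (simp add: power2_diff sum.distrib sum_subtractf sum_distrib_left mult_ac)
  also have "\<dots> \<le> 2 * (real q ^ d / q) * n"
    unfolding a_def card_V of_nat_power
    by (rule variance_from_moments)
       (use q_ge_2 hits_first_moment[OF Y l] hits_second_moment[OF Y l] in \<open>auto simp: n_def\<close>)
  finally show ?thesis unfolding a_def n_def .
qed

text \<open>The incidence bound: for \<open>X, Y \<subseteq> \<bbbF>\<^sub>q\<^sup>d\<close> and \<open>l \<noteq> 0\<close> the number of pairs with
  \<open>B(x,y) = l\<close> deviates from \<open>|X||Y|/q\<close> by at most \<open>(2q\<^sup>d\<^sup>-\<^sup>1|X||Y|)\<^sup>1\<^sup>/\<^sup>2\<close>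
  (Cauchy--Schwarz over \<open>X\<close>, then the variance bound).\<close>
lemma incidence_discrepancy:
  assumes X: "X \<subseteq> V" and Y: "Y \<subseteq> V" and l: "l \<in> carrier R" "l \<noteq> \<zero>"
  shows "(\<Sum>x\<in>X. \<Sum>y\<in>Y. (if B x y = l then 1 else 0) - 1 / real q)\<^sup>2
          \<le> 2 * (real q ^ d / q) * card X * card Y"
proof -
  define h where "h x = hits Y l x - real (card Y) / q" for x
  have "(\<Sum>x\<in>X. \<Sum>y\<in>Y. (if B x y = l then 1 else 0) - 1 / real q) = (\<Sum>x\<in>X. 1 * h x)"
    unfolding h_def hits_def by (simp add: sum_subtractf)
  also have "(\<dots>)\<^sup>2 \<le> (\<Sum>x\<in>X. 1\<^sup>2) * (\<Sum>x\<in>X. (h x)\<^sup>2)"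
    by (rule Cauchy_Schwarz_ineq_sum)
  also have "\<dots> \<le> real (card X) * (\<Sum>x\<in>V. (h x)\<^sup>2)"
    using sum_mono2[OF finite_V X, of "\<lambda>x. (h x)\<^sup>2"] by (simp add: mult_left_mono)
  also have "\<dots> \<le> real (card X) * (2 * (real q ^ d / q) * card Y)"
    using hits_variance[OF Y l] unfolding h_def by (intro mult_left_mono) auto
  finally show ?thesis by (simp add: algebra_simps)
qed

end

section \<open>Counting solutions of a system of bilinear equations\<close>

definition avoid :: "(nat \<times> nat) set \<Rightarrow> nat \<Rightarrow> (nat \<times> nat) set" where
  "avoid F w = {e\<in>F. fst e \<noteq> w \<and> snd e \<noteq> w}"

lemma sum_sum_if_conj:
  assumes "finite A" "finite B"
  shows "(\<Sum>x\<in>A. \<Sum>y\<in>B. if P x \<and> Q y then f x y else 0) = (\<Sum>x\<in>{x\<in>A. P x}. \<Sum>y\<in>{y\<in>B. Q y}. f x y)"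
proof -
  have "(\<Sum>y\<in>B. if P x \<and> Q y then f x y else 0) = (if P x then \<Sum>y\<in>{y\<in>B. Q y}. f x y else 0)" for x
    using assms by (cases "P x") (simp_all add: sum.inter_filter)
  thus ?thesis by (simp only: sum.inter_filter[OF assms(1)])
qed

locale constraint_system = nondeg_bilinear_space +
  fixes k :: nat and E :: "(nat \<times> nat) set" and A :: "nat \<Rightarrow> 'a list set"
    and lam :: "nat \<times> nat \<Rightarrow> 'a"
  assumes edges: "edge_set k E"
    and A_sub: "\<forall>i<k. A i \<subseteq> V"
    and lam_nonzero: "\<forall>e\<in>E. lam e \<in> carrier R - {\<zero>}"
begin

definition tuples :: "(nat \<Rightarrow> 'a list) set" where
  "tuples = PiE {..<k} A"

definition sat :: "(nat \<times> nat) set \<Rightarrow> (nat \<Rightarrow> 'a list) \<Rightarrow> bool" where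
  "sat F f \<longleftrightarrow> (\<forall>(i, j)\<in>F. B (f i) (f j) = lam (i, j))"

definition sol_count :: "(nat \<times> nat) set \<Rightarrow> real" where
  "sol_count F = real (card {f\<in>tuples. sat F f})"

definition link :: "(nat \<times> nat) set \<Rightarrow> nat \<Rightarrow> (nat \<Rightarrow> 'a list) \<Rightarrow> 'a list set" where
  "link G u r = {x\<in>A u. sat G (r(u := x))}"

lemma edgeD: "(i, j) \<in> E \<Longrightarrow> i < k \<and> j < k \<and> i \<noteq> j \<and> (j, i) \<notin> E"
  using edges unfolding edge_set_def by blast

lemma finite_E: "finite E"
proof -
  have "E \<subseteq> {..<k} \<times> {..<k}" using edgeD by auto
  thus ?thesis using finite_subset by blast
qed

lemma finite_A: "i < k \<Longrightarrow> finite (A i)"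
  using A_sub finite_V finite_subset by blast

lemma finite_tuples: "finite tuples"
  unfolding tuples_def using finite_A by (intro finite_PiE) auto

lemma sol_count_sum: "sol_count F = (\<Sum>f\<in>tuples. if sat F f then 1 else 0)"
  unfolding sol_count_def using sum_indicator_card[OF finite_tuples, of "sat F"] by simp

lemma sol_count_empty: "sol_count {} = (\<Prod>i<k. real (card (A i)))"
  unfolding sol_count_def sat_def tuples_def by (simp add: card_PiE)

lemma sol_count_nonneg: "sol_count F \<ge> 0"
  unfolding sol_count_def by simp

lemma sat_Un: "sat (F\<^sub>1 \<union> F\<^sub>2) f \<longleftrightarrow> sat F\<^sub>1 f \<and> sat F\<^sub>2 f"
  unfolding sat_def by blast

lemma sat_avoid_upd: "sat (avoid F w) (f(w := x)) = sat (avoid F w) f"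
  unfolding sat_def avoid_def by auto

text \<open>Removing the constraint \<open>(u,v)\<close>, every remaining constraint avoids \<open>u\<close> or \<open>v\<close>, because
  \<open>E\<close> contains no second constraint between \<open>u\<close> and \<open>v\<close>.\<close>
lemma remove_edge_split:
  assumes "F \<subseteq> E" "(u, v) \<in> F"
  shows "F - {(u, v)} = avoid F v \<union> avoid F u"
proof
  show "F - {(u, v)} \<subseteq> avoid F v \<union> avoid F u"
  proof
    fix e assume e: "e \<in> F - {(u, v)}"
    obtain i j where ij: "e = (i, j)" by (cases e)
    have "i \<noteq> j" "(i, j) \<noteq> (u, v)" using e ij assms(1) edgeD by auto
    moreover have "u \<noteq> v" "(v, u) \<notin> F" using assms edgeD by auto
    ultimately have "(i \<noteq> v \<and> j \<noteq> v) \<or> (i \<noteq> u \<and> j \<noteq> u)" using e ij by auto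
    thus "e \<in> avoid F v \<union> avoid F u" using e ij unfolding avoid_def by auto
  qed
qed (auto simp: avoid_def)

lemma sol_count_free_vertex:
  assumes u: "u < k" and v: "v < k" and uv: "u \<noteq> v" and free: "avoid G v = G"
  shows "sol_count G
           = real (card (A v)) * (\<Sum>r\<in>PiE ({..<k} - {u, v}) A. real (card (link G u r)))"
proof -
  have sat_upd: "sat G (r(u := x, v := y)) = sat G (r(u := x))" for r x y
    using sat_avoid_upd[of G v "r(u := x)" y] free by simp
  have "sol_count G = (\<Sum>r\<in>PiE ({..<k} - {u, v}) A. \<Sum>x\<in>A u. \<Sum>y\<in>A v.
                          if sat G (r(u := x, v := y)) then 1 else 0)"
    unfolding sol_count_sum tuples_def by (rule sum_PiE_split_two) (use u v uv in auto)
  also have "\<dots> = (\<Sum>r\<in>PiE ({..<k} - {u, v}) A. real (card (A v)) * real (card (link G u r)))"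
    unfolding sat_upd link_def
    by (simp add: sum_distrib_left[symmetric] sum_indicator_card[OF finite_A[OF u]] mult.commute)
  finally show ?thesis by (simp add: sum_distrib_left)
qed

lemma edge_removal_identity:
  assumes F: "F \<subseteq> E" and uv: "(u, v) \<in> F"
  shows "sol_count F - sol_count (F - {(u, v)}) / q
    = (\<Sum>r\<in>PiE ({..<k} - {u, v}) A. \<Sum>x\<in>link (avoid F v) u r. \<Sum>y\<in>link (avoid F u) v r.
         (if B x y = lam (u, v) then 1 else 0) - 1 / real q)"
proof -
  have u: "u < k" and v: "v < k" and uv_ne: "u \<noteq> v" using edgeD F uv by auto
  define ind where "ind x y = (if B x y = lam (u, v) then 1 else 0) - 1 / real q" for x y
  have sat_F: "sat F f \<longleftrightarrow> sat (F - {(u, v)}) f \<and> B (f u) (f v) = lam (u, v)" for f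
    using uv unfolding sat_def by auto
  have sat_rest: "sat (F - {(u, v)}) (r(u := x, v := y))
                    \<longleftrightarrow> sat (avoid F v) (r(u := x)) \<and> sat (avoid F u) (r(v := y))" for r x y
  proof -
    have "r(u := x, v := y) = r(v := y, u := x)" using uv_ne by (rule fun_upd_twist)
    thus ?thesis unfolding remove_edge_split[OF F uv] sat_Un
      using sat_avoid_upd[of F v "r(u := x)" y] sat_avoid_upd[of F u "r(v := y)" x] by simp
  qed
  have inner: "(\<Sum>x\<in>A u. \<Sum>y\<in>A v. if sat (avoid F v) (r(u := x)) \<and> sat (avoid F u) (r(v := y))
                                     then ind x y else 0)
         = (\<Sum>x\<in>link (avoid F v) u r. \<Sum>y\<in>link (avoid F u) v r. ind x y)" for r
    unfolding link_def by (rule sum_sum_if_conj) (use finite_A u v in auto)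
  have "sol_count F - sol_count (F - {(u, v)}) / q
      = (\<Sum>f\<in>tuples. (if sat F f then 1 else 0) - (if sat (F - {(u, v)}) f then 1 else 0) / real q)"
    unfolding sol_count_sum by (simp add: sum_subtractf sum_divide_distrib)
  also have "\<dots> = (\<Sum>f\<in>tuples. if sat (F - {(u, v)}) f then ind (f u) (f v) else 0)"
    by (rule sum.cong) (auto simp: sat_F ind_def)
  also have "\<dots> = (\<Sum>r\<in>PiE ({..<k} - {u, v}) A. \<Sum>x\<in>A u. \<Sum>y\<in>A v.
                     if sat (F - {(u, v)}) (r(u := x, v := y)) then ind x y else 0)"
    unfolding tuples_def using uv_ne by (subst sum_PiE_split_two) (use u v in \<open>auto cong: if_cong\<close>)
  also have "\<dots> = (\<Sum>r\<in>PiE ({..<k} - {u, v}) A. \<Sum>x\<in>link (avoid F v) u r. \<Sum>y\<in>link (avoid F u) v r. ind x y)"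
    unfolding sat_rest inner ..
  finally show ?thesis unfolding ind_def .
qed

lemma edge_removal_error:
  assumes F: "F \<subseteq> E" and uv: "(u, v) \<in> F"
  shows "(sol_count F - sol_count (F - {(u, v)}) / q)\<^sup>2 * (real (card (A u)) * real (card (A v)))
           \<le> 2 * (real q ^ d / q) * sol_count (avoid F v) * sol_count (avoid F u)"
proof -
  have u: "u < k" and v: "v < k" and uv_ne: "u \<noteq> v" using edgeD F uv by auto
  have l: "lam (u, v) \<in> carrier R" "lam (u, v) \<noteq> \<zero>" using lam_nonzero F uv by auto
  define P' where "P' = PiE ({..<k} - {u, v}) A"
  define L\<^sub>u where "L\<^sub>u r = real (card (link (avoid F v) u r))" for r
  define L\<^sub>v where "L\<^sub>v r = real (card (link (avoid F u) v r))" for r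
  have links: "link (avoid F v) u r \<subseteq> V" "link (avoid F u) v r \<subseteq> V" for r
    unfolding link_def using A_sub u v by auto
  have bound: "(sol_count F - sol_count (F - {(u, v)}) / q)\<^sup>2
          \<le> 2 * (real q ^ d / q) * (\<Sum>r\<in>P'. L\<^sub>u r) * (\<Sum>r\<in>P'. L\<^sub>v r)"
    unfolding edge_removal_identity[OF F uv] P'_def[symmetric]
    by (rule sum_square_le_by_products)
       (use incidence_discrepancy[OF links l] in \<open>auto simp: L\<^sub>u_def L\<^sub>v_def\<close>)
  have count_v: "sol_count (avoid F v) = real (card (A v)) * (\<Sum>r\<in>P'. L\<^sub>u r)"
    unfolding P'_def L\<^sub>u_def by (rule sol_count_free_vertex) (use u v uv_ne in \<open>auto simp: avoid_def\<close>)
  have count_u: "sol_count (avoid F u) = real (card (A u)) * (\<Sum>r\<in>P'. L\<^sub>v r)"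
    unfolding P'_def L\<^sub>v_def insert_commute[of u v]
    by (rule sol_count_free_vertex) (use u v uv_ne in \<open>auto simp: avoid_def\<close>)
  have "(sol_count F - sol_count (F - {(u, v)}) / q)\<^sup>2 * (real (card (A u)) * real (card (A v)))
      \<le> 2 * (real q ^ d / q) * (\<Sum>r\<in>P'. L\<^sub>u r) * (\<Sum>r\<in>P'. L\<^sub>v r) * (real (card (A u)) * real (card (A v)))"
    using bound by (rule mult_right_mono) simp
  also have "\<dots> = 2 * (real q ^ d / q) * sol_count (avoid F v) * sol_count (avoid F u)"
    unfolding count_u count_v by (simp add: mult_ac)
  finally show ?thesis .
qed

lemma num_solutions_eq: "num_solutions R B k E A lam = card {f\<in>tuples. sat E f}"
proof -
  define LS where "LS = {as. length as = k \<and> (\<forall>i<k. as ! i \<in> A i)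
                              \<and> (\<forall>(i, j)\<in>E. B (as ! i) (as ! j) = lam (i, j))}"
  define g where "g as = (\<lambda>i. if i < k then as ! i else undefined)" for as :: "'a list list"
  define h where "h f = map f [0..<k]" for f :: "nat \<Rightarrow> 'a list"
  have "bij_betw g LS {f\<in>tuples. sat E f}"
  proof (rule bij_betwI[where g = h])
    show "g \<in> LS \<rightarrow> {f\<in>tuples. sat E f}"
    proof
      fix as assume as: "as \<in> LS"
      have "g as \<in> tuples"
        unfolding tuples_def g_def using as unfolding LS_def by (auto simp: PiE_iff extensional_def)
      moreover have "sat E (g as)" unfolding sat_def g_def using as edgeD unfolding LS_def by fastforce
      ultimately show "g as \<in> {f\<in>tuples. sat E f}" by simp
    qed
    show "h \<in> {f\<in>tuples. sat E f} \<rightarrow> LS"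
    proof
      fix f assume f: "f \<in> {f\<in>tuples. sat E f}"
      have "\<forall>i<k. h f ! i \<in> A i" using f unfolding h_def tuples_def by auto
      moreover have "\<forall>(i, j)\<in>E. B (h f ! i) (h f ! j) = lam (i, j)"
        using f edgeD unfolding h_def sat_def by fastforce
      ultimately show "h f \<in> LS" unfolding LS_def h_def by simp
    qed
    show "h (g as) = as" if "as \<in> LS" for as
      using that unfolding LS_def g_def h_def by (intro nth_equalityI) auto
    show "g (h f) = f" if "f \<in> {f\<in>tuples. sat E f}" for f
      using that unfolding g_def h_def tuples_def by (auto simp: fun_eq_iff PiE_iff extensional_def)
  qed
  thus ?thesis unfolding num_solutions_def LS_def[symmetric] by (rule bij_betw_same_card)
qed

end

section \<open>Systems with large sets: the induction on the number of constraints\<close>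

lemma relative_error_step:
  fixes S S' T Q \<delta> :: real
  assumes Q: "Q > 0" and m: "m \<ge> 1"
    and prev: "\<bar>S' - T / Q ^ (m - 1)\<bar> \<le> ((1 + \<delta>) ^ (m - 1) - 1) * T / Q ^ (m - 1)"
    and step: "\<bar>S - S' / Q\<bar> \<le> \<delta> * ((1 + \<delta>) ^ (m - 1) * T / Q ^ m)"
  shows "\<bar>S - T / Q ^ m\<bar> \<le> ((1 + \<delta>) ^ m - 1) * T / Q ^ m"
proof -
  have pow: "Q ^ m = Q * Q ^ (m - 1)" "(1 + \<delta>) ^ m = (1 + \<delta>) * (1 + \<delta>) ^ (m - 1)"
    using m by (metis Suc_diff_le diff_Suc_1 power_Suc)+
  have "\<bar>S - T / Q ^ m\<bar> = \<bar>(S' - T / Q ^ (m - 1)) / Q + (S - S' / Q)\<bar>"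
    unfolding pow using Q by (simp add: field_simps)
  also have "\<dots> \<le> \<bar>S' - T / Q ^ (m - 1)\<bar> / Q + \<bar>S - S' / Q\<bar>"
    using Q by (simp add: order_trans[OF abs_triangle_ineq])
  also have "\<dots> \<le> ((1 + \<delta>) ^ (m - 1) - 1) * T / Q ^ (m - 1) / Q + \<delta> * ((1 + \<delta>) ^ (m - 1) * T / Q ^ m)"
    using Q by (intro add_mono divide_right_mono prev step) simp
  also have "\<dots> = ((1 + \<delta>) ^ m - 1) * T / Q ^ m"
    unfolding pow using Q by (simp add: field_simps)
  finally show ?thesis .
qed

locale large_system = constraint_system +
  fixes t :: nat and C :: real
  assumes degree_le: "\<forall>i<k. degree_in E i \<le> t"
    and A_large: "\<forall>i<k. real (card (A i)) \<ge> C * real q powr ((real d - 1) / 2 + real t)"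
    and C_pos: "C > 0"
begin

text \<open>Each removed constraint costs a relative error \<open>\<delta> = \<surd>2 / C\<close>.\<close>
definition delta :: real where "delta = sqrt 2 / C"

definition total :: real where "total = (\<Prod>i<k. real (card (A i)))"

lemma delta_nonneg: "delta \<ge> 0"
  unfolding delta_def using C_pos by simp

lemma total_nonneg: "total \<ge> 0"
  unfolding total_def by (simp add: prod_nonneg)

lemma q_pos: "real q > 0"
  using q_ge_2 by simp

lemma card_product_large:
  assumes "u < k" "v < k"
  shows "C\<^sup>2 * ((real q ^ d / q) * (real q ^ t)\<^sup>2) \<le> real (card (A u)) * real (card (A v))"
proof -
  define Z where "Z = real q powr ((real d - 1) / 2 + real t)"
  have "Z\<^sup>2 = real q powr ((real d - 1) / 2 + real t + ((real d - 1) / 2 + real t))"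
    unfolding Z_def by (simp add: power2_eq_square powr_add[symmetric])
  also have "(real d - 1) / 2 + real t + ((real d - 1) / 2 + real t) = real (d + t + t) - 1" by simp
  also have "real q powr (real (d + t + t) - 1) = real q powr real (d + t + t) / real q powr 1"
    by (rule powr_diff)
  also have "\<dots> = real q ^ (d + t + t) / real q"
    using q_pos by (subst powr_realpow) simp_all
  also have "\<dots> = (real q ^ d / q) * (real q ^ t)\<^sup>2" by (simp add: power_add power2_eq_square)
  finally have Z: "Z\<^sup>2 = (real q ^ d / q) * (real q ^ t)\<^sup>2" .
  have "C * Z \<ge> 0" unfolding Z_def using C_pos by simp
  hence "(C * Z) * (C * Z) \<le> real (card (A u)) * real (card (A v))"
    using A_large assms unfolding Z_def by (intro mult_mono) auto
  thus ?thesis using Z by (simp add: power2_eq_square algebra_simps)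
qed

lemma card_le_card_avoid:
  assumes F: "F \<subseteq> E" and w: "w < k"
  shows "card F \<le> card (avoid F w) + t"
proof -
  have fin: "finite F" using F finite_E finite_subset by blast
  have "F = avoid F w \<union> {e\<in>F. fst e = w \<or> snd e = w}" unfolding avoid_def by auto
  hence "card F \<le> card (avoid F w) + card {e\<in>F. fst e = w \<or> snd e = w}"
    by (metis card_Un_le)
  also have "card {e\<in>F. fst e = w \<or> snd e = w} \<le> degree_in E w"
    unfolding degree_in_def by (rule card_mono) (use finite_E F in auto)
  also have "\<dots> \<le> t" using degree_le w by blast
  finally show ?thesis by simp
qed

lemma card_avoid_less:
  assumes F: "F \<subseteq> E" and uv: "(u, v) \<in> F" and w: "w = u \<or> w = v"
  shows "card (avoid F w) < card F"
proof (rule psubset_card_mono)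
  show "finite F" using F finite_E finite_subset by blast
  have "(u, v) \<notin> avoid F w" using w unfolding avoid_def by auto
  thus "avoid F w \<subset> F" using uv unfolding avoid_def by blast
qed

lemma sol_count_avoid_le:
  assumes F: "F \<subseteq> E" and uv: "(u, v) \<in> F" and w: "w = u \<or> w = v"
    and bound: "sol_count (avoid F w) \<le> (1 + delta) ^ card (avoid F w) * total / real q ^ card (avoid F w)"
  shows "sol_count (avoid F w) \<le> (1 + delta) ^ (card F - 1) * total / real q ^ card F * real q ^ t"
proof -
  define g where "g = card (avoid F w)"
  have "w < k" using w edgeD F uv by auto
  hence t: "card F \<le> g + t" unfolding g_def using card_le_card_avoid F by blast
  have "g < card F" unfolding g_def using card_avoid_less[OF F uv w] .
  hence g: "g \<le> card F - 1" by simp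
  have "sol_count (avoid F w) \<le> (1 + delta) ^ g * total / real q ^ g" using bound unfolding g_def .
  also have "\<dots> \<le> (1 + delta) ^ (card F - 1) * total / real q ^ g"
    using g delta_nonneg total_nonneg q_pos
    by (intro divide_right_mono mult_right_mono power_increasing) auto
  also have "\<dots> = (1 + delta) ^ (card F - 1) * total / real q ^ card F * real q ^ (card F - g)"
    using q_pos \<open>g < card F\<close> by (simp add: field_simps power_add[symmetric])
  also have "\<dots> \<le> (1 + delta) ^ (card F - 1) * total / real q ^ card F * real q ^ t"
    using t q_ge_2 delta_nonneg total_nonneg q_pos
    by (intro mult_left_mono power_increasing) auto
  finally show ?thesis .
qed

lemma edge_removal_step:
  assumes F: "F \<subseteq> E" and uv: "(u, v) \<in> F"
    and bound_u: "sol_count (avoid F u) \<le> z * real q ^ t"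
    and bound_v: "sol_count (avoid F v) \<le> z * real q ^ t"
  shows "\<bar>sol_count F - sol_count (F - {(u, v)}) / q\<bar> \<le> delta * z"
proof -
  define err where "err = sol_count F - sol_count (F - {(u, v)}) / q"
  define M where "M = (real q ^ d / q) * (real q ^ t)\<^sup>2"
  have M: "M > 0" unfolding M_def using q_pos by simp
  have z: "z \<ge> 0" using sol_count_nonneg[of "avoid F u"] bound_u q_pos
    by (meson order_trans zero_le_mult_iff zero_less_power not_le)
  have "err\<^sup>2 * (C\<^sup>2 * M) \<le> err\<^sup>2 * (real (card (A u)) * real (card (A v)))"
    using card_product_large edgeD F uv unfolding M_def by (intro mult_left_mono) auto
  also have "\<dots> \<le> 2 * (real q ^ d / q) * sol_count (avoid F v) * sol_count (avoid F u)"
    unfolding err_def by (rule edge_removal_error[OF F uv])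
  also have "\<dots> \<le> 2 * (real q ^ d / q) * (z * real q ^ t) * (z * real q ^ t)"
    using bound_u bound_v sol_count_nonneg z q_pos
    by (intro mult_mono mult_left_mono) auto
  also have "\<dots> = (2 * z\<^sup>2) * M" unfolding M_def by (simp add: power2_eq_square)
  finally have "C\<^sup>2 * err\<^sup>2 \<le> 2 * z\<^sup>2" using M by (simp add: mult_ac)
  hence "err\<^sup>2 \<le> (delta * z)\<^sup>2"
    unfolding delta_def using C_pos by (simp add: power_mult_distrib power_divide field_simps)
  hence "\<bar>err\<bar> \<le> \<bar>delta * z\<bar>" by (simp only: abs_le_square_iff)
  thus ?thesis unfolding err_def using delta_nonneg z by simp
qed

lemma sol_count_approx:
  assumes "F \<subseteq> E"
  shows "\<bar>sol_count F - total / real q ^ card F\<bar> \<le> ((1 + delta) ^ card F - 1) * total / real q ^ card F"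
  using assms
proof (induction "card F" arbitrary: F rule: less_induct)
  case less
  show ?case
  proof (cases "F = {}")
    case True
    thus ?thesis using sol_count_empty unfolding total_def by simp
  next
    case False
    then obtain u v where uv: "(u, v) \<in> F" by auto
    define m where "m = card F"
    have fin: "finite F" using less.prems finite_E finite_subset by blast
    hence m: "m \<ge> 1" using False unfolding m_def by (simp add: Suc_le_eq card_gt_0_iff)
    define z where "z = (1 + delta) ^ (m - 1) * total / real q ^ m"
    have avoid_le: "sol_count (avoid F w) \<le> z * real q ^ t" if w: "w = u \<or> w = v" for w
    proof -
      have "avoid F w \<subseteq> E" using less.prems unfolding avoid_def by auto
      from less.hyps[OF card_avoid_less[OF less.prems uv w] this]
      have "sol_count (avoid F w) \<le> (1 + delta) ^ card (avoid F w) * total / real q ^ card (avoid F w)"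
        by (simp add: abs_le_iff algebra_simps diff_divide_distrib)
      from sol_count_avoid_le[OF less.prems uv w this] show ?thesis unfolding z_def m_def .
    qed
    have "\<bar>sol_count F - sol_count (F - {(u, v)}) / q\<bar> \<le> delta * z"
      using edge_removal_step[OF less.prems uv] avoid_le by blast
    moreover have "\<bar>sol_count (F - {(u, v)}) - total / real q ^ (m - 1)\<bar>
                \<le> ((1 + delta) ^ (m - 1) - 1) * total / real q ^ (m - 1)"
      using less.hyps[of "F - {(u, v)}"] less.prems uv fin m unfolding m_def by auto
    ultimately show ?thesis
      using relative_error_step[OF q_pos m] unfolding m_def z_def by blast
  qed
qed

end

lemma one_plus_power_minus_one_le:
  fixes x :: real
  assumes "0 \<le> x"
  shows "(1 + x) ^ n - 1 \<le> real n * x * (1 + x) ^ n"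
proof (induction n)
  case (Suc n)
  have "1 \<le> (1 + x) ^ Suc n" using assms by (intro one_le_power) simp
  hence "x \<le> x * (1 + x) ^ Suc n" using assms mult_left_mono[of 1 "(1 + x) ^ Suc n" x] by simp
  moreover have "(1 + x) * ((1 + x) ^ n - 1) \<le> (1 + x) * (real n * x * (1 + x) ^ n)"
    using Suc assms by (intro mult_left_mono) auto
  ultimately have "(1 + x) * ((1 + x) ^ n - 1) + x \<le> (1 + x) * (real n * x * (1 + x) ^ n) + x * (1 + x) ^ Suc n"
    by linarith
  thus ?case by (simp add: algebra_simps)
qed simp

lemma exists_small_delta:
  fixes \<epsilon> :: real
  assumes "\<epsilon> > 0"
  shows "\<exists>\<delta>>0. (1 + \<delta>) ^ L - 1 \<le> \<epsilon>"
proof -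
  define N where "N = real L * 2 ^ L"
  define \<delta> where "\<delta> = min 1 (\<epsilon> / (N + 1))"
  have N: "N \<ge> 0" unfolding N_def by simp
  have \<delta>: "\<delta> > 0" "\<delta> \<le> 1" "\<delta> \<le> \<epsilon> / (N + 1)"
    unfolding \<delta>_def using assms N by auto
  have "(1 + \<delta>) ^ L - 1 \<le> real L * \<delta> * (1 + \<delta>) ^ L"
    using \<delta> by (intro one_plus_power_minus_one_le) simp
  also have "\<dots> \<le> real L * \<delta> * 2 ^ L"
    using \<delta> by (intro mult_left_mono power_mono) auto
  also have "\<dots> \<le> \<delta> * (N + 1)" using \<delta> unfolding N_def by (simp add: algebra_simps)
  also have "\<dots> \<le> \<epsilon>" using \<delta>(3) N by (simp add: pos_le_divide_eq)
  finally show ?thesis using \<delta> by (intro exI[of _ \<delta>]) auto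
qed

lemma solution_count_estimate:
  fixes R :: "('a, 'b) ring_scheme"
  assumes field: "field R" "finite (carrier R)"
    and form: "bilinear_form R d B" "nondegenerate R d B"
    and system: "edge_set k E" "\<forall>i<k. degree_in E i \<le> t" "\<forall>e\<in>E. lam e \<in> carrier R - {\<zero>\<^bsub>R\<^esub>}"
    and C: "C > 0" "(1 + sqrt 2 / C) ^ card E - 1 \<le> \<epsilon>"
    and A: "\<forall>i<k. A i \<subseteq> fvecs R d \<and>
              real (card (A i)) \<ge> C * real (card (carrier R)) powr ((real d - 1) / 2 + real t)"
  shows "\<bar>real (num_solutions R B k E A lam)
            - real (card (carrier R)) powi (- int (card E)) * (\<Prod>i<k. real (card (A i)))\<bar>
          \<le> \<epsilon> * real (card (carrier R)) powi (- int (card E)) * (\<Prod>i<k. real (card (A i)))"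
proof -
  have "large_system R d B k E A lam t C"
    unfolding large_system_def large_system_axioms_def constraint_system_def
      constraint_system_axioms_def nondeg_bilinear_space_def nondeg_bilinear_space_axioms_def
    using field form system C A by blast
  then interpret large_system R d B k E A lam t C .
  have powi: "real q powi (- int (card E)) = 1 / real q ^ card E"
    by (simp add: power_int_minus divide_inverse)
  have "\<bar>sol_count E - total / real q ^ card E\<bar> \<le> ((1 + delta) ^ card E - 1) * (total / real q ^ card E)"
    using sol_count_approx[of E] by simp
  also have "\<dots> \<le> \<epsilon> * (total / real q ^ card E)"
    using C total_nonneg q_pos unfolding delta_def by (intro mult_right_mono) auto
  finally show ?thesis
    unfolding num_solutions_eq powi total_def[symmetric] sol_count_def[symmetric] by simp
qed

theorem theorem1p1:
  fixes d k t :: nat and E :: "(nat \<times> nat) set"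
  assumes "d \<ge> 1" and "k \<ge> 2" and "1 \<le> t" and "t \<le> k - 1"
    and "edge_set k E"
    and "\<forall>i<k. degree_in E i \<le> t"
  shows "\<forall>\<epsilon>>0. \<exists>C>0. \<forall>(R :: nat ring) (B :: nat list \<Rightarrow> nat list \<Rightarrow> nat)
            (A :: nat \<Rightarrow> nat list set) (lam :: nat \<times> nat \<Rightarrow> nat).
     field R \<longrightarrow> finite (carrier R) \<longrightarrow>
     bilinear_form R d B \<longrightarrow> nondegenerate R d B \<longrightarrow>
     (\<forall>i<k. A i \<subseteq> fvecs R d \<and>
        real (card (A i)) \<ge> C * real (card (carrier R)) powr ((real d - 1) / 2 + real t)) \<longrightarrow>
     (\<forall>e\<in>E. lam e \<in> carrier R - {\<zero>\<^bsub>R\<^esub>}) \<longrightarrow>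
     \<bar>real (num_solutions R B k E A lam)
        - real (card (carrier R)) powi (- int (card E)) * (\<Prod>i<k. real (card (A i)))\<bar>
       \<le> \<epsilon> * real (card (carrier R)) powi (- int (card E)) * (\<Prod>i<k. real (card (A i)))"
  apply (intro allI impI)
  subgoal premises \<epsilon>_pos for \<epsilon>
  proof -
    obtain \<delta> where \<delta>: "\<delta> > 0" "(1 + \<delta>) ^ card E - 1 \<le> \<epsilon>"
      using exists_small_delta[OF \<epsilon>_pos] by blast
    define C where "C = sqrt 2 / \<delta>"
    have C: "C > 0" "(1 + sqrt 2 / C) ^ card E - 1 \<le> \<epsilon>" unfolding C_def using \<delta> by auto
    show ?thesis
      by (intro exI[of _ C] conjI allI impI solution_count_estimate) (use C assms(5,6) in auto)
  qed
  done

end
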